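(* (a) For every $\varepsilon>0$ there is a single-item instance with two agents and SOS valuations such that every ex-post IC-IR mechanism (randomized, not necessarily universally) has, at some signal profile $\mathbf{s}$, expected welfare at most $(\tfrac12+\varepsilon)$ times the optimal welfare $\max_i v_i(\mathbf{s})$. (b) For every integer $m\ge3$ and $d=m^2$, there is a single-item instance with $n=m=\sqrt d$ agents and $d$-SOS valuations such that every ex-post IC-IR mechanism has, at some signal profile, expected welfare at most $\frac{2\sqrt d}{d}+o(1)$ times the optimal welfare; hence no such mechanism achieves an approximation ratio better than $\Omega(\sqrt d)$.
   Context: Single-item interdependent-value model: agents have private signals $s_j\ge0$ (an agent may have a trivial fixed signal), values $v_i(\mathbf{s})\ge0$ are public functions of the signal profile, weakly increasing in each coordinate. A (randomized) mechanism maps reports $\mathbf{s}$ to winning probabilities $x_i(\mathbf{s})$ with $\sum_i x_i(\mathbf{s})\le1$ and expected payments; it is ex-post IC iff $x_i(s_i,\mathbf{s}_{-i})$ is weakly increasing in $s_i$ for every $i$ and $\mathbf{s}_{-i}$. Expected welfare at $\mathbf{s}$ is $\sum_i x_i(\mathbf{s})v_i(\mathbf{s})$. $d$-SOS: for every coordinate $j$, $s_j\ge0$, $\delta\ge0$, and $\mathbf{s}'_{-j}\le\mathbf{s}_{-j}$ coordinate-wise, $d\big(v(\mathbf{s}'_{-j},s_j+\delta)-v(\mathbf{s}'_{-j},s_j)\big)\ge v(\mathbf{s}_{-j},s_j+\delta)-v(\mathbf{s}_{-j},s_j)$; SOS means $d=1$. *)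

theory Defs
  imports Complex_Main
begin

text \<open>Agents are 0,...,n-1. Agents in T have a trivial (fixed) signal, normalised to 0;
  all other agents have a private signal in [0,\<infinity>). Profiles are functions nat => real,
  set to 0 outside the agents.\<close>

definition profiles :: "nat \<Rightarrow> nat set \<Rightarrow> (nat \<Rightarrow> real) set" where
  "profiles n T = {s. \<forall>j. (j < n \<and> j \<notin> T \<longrightarrow> 0 \<le> s j) \<and>
                          (\<not> (j < n \<and> j \<notin> T) \<longrightarrow> s j = 0)}"

definition valid_values :: "nat \<Rightarrow> nat set \<Rightarrow> (nat \<Rightarrow> (nat \<Rightarrow> real) \<Rightarrow> real) \<Rightarrow> bool" where
  "valid_values n T v \<longleftrightarrow>
     (\<forall>i<n. \<forall>s\<in>profiles n T. 0 \<le> v i s) \<and>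
     (\<forall>i<n. \<forall>s\<in>profiles n T. \<forall>s'\<in>profiles n T. (\<forall>j. s j \<le> s' j) \<longrightarrow> v i s \<le> v i s')"

text \<open>d-SOS (SOS is d = 1).\<close>
definition d_SOS :: "real \<Rightarrow> nat \<Rightarrow> nat set \<Rightarrow> (nat \<Rightarrow> (nat \<Rightarrow> real) \<Rightarrow> real) \<Rightarrow> bool" where
  "d_SOS d n T v \<longleftrightarrow>
     (\<forall>i<n. \<forall>j<n. j \<notin> T \<longrightarrow>
        (\<forall>s\<in>profiles n T. \<forall>s'\<in>profiles n T. \<forall>\<delta>\<ge>0.
           (\<forall>k. k \<noteq> j \<longrightarrow> s' k \<le> s k) \<longrightarrow>
           d * (v i (s'(j := s j + \<delta>)) - v i (s'(j := s j)))
             \<ge> v i (s(j := s j + \<delta>)) - v i s))"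

text \<open>Ex-post IC-IR randomized mechanism, given by its allocation rule x s i
  (winning probability of agent i at reported profile s): feasible and
  weakly increasing in the agent's own signal (the ex-post IC characterisation).\<close>
definition ic_mechanism :: "nat \<Rightarrow> nat set \<Rightarrow> ((nat \<Rightarrow> real) \<Rightarrow> nat \<Rightarrow> real) \<Rightarrow> bool" where
  "ic_mechanism n T x \<longleftrightarrow>
     (\<forall>s\<in>profiles n T. (\<forall>i<n. 0 \<le> x s i) \<and> (\<Sum>i<n. x s i) \<le> 1) \<and>
     (\<forall>i<n. i \<notin> T \<longrightarrow> (\<forall>s\<in>profiles n T. \<forall>t. s i \<le> t \<longrightarrow> x s i \<le> x (s(i := t)) i))"

definition welfare :: "nat \<Rightarrow> ((nat \<Rightarrow> real) \<Rightarrow> nat \<Rightarrow> real) \<Rightarrow> (nat \<Rightarrow> (nat \<Rightarrow> real) \<Rightarrow> real) \<Rightarrow> (nat \<Rightarrow> real) \<Rightarrow> real" where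
  "welfare n x v s = (\<Sum>i<n. x s i * v i s)"

definition opt_welfare :: "nat \<Rightarrow> (nat \<Rightarrow> (nat \<Rightarrow> real) \<Rightarrow> real) \<Rightarrow> (nat \<Rightarrow> real) \<Rightarrow> real" where
  "opt_welfare n v s = Max ((\<lambda>i. v i s) ` {..<n})"

end

theory Submission
  imports Defs
begin

text \<open>Both bounds come from instances in which some agent is awarded the item with small
  probability at a profile where her own value is large. Monotonicity of the allocation in her
  own signal keeps that probability small after she lowers her signal to the bottom, while the
  value she holds there is still the dominant one.

  (a) Agent 0 has constant value 1, agent 1 (trivial signal) has value \<open>H min(s\<^sub>0, 1)\<close>.
  At \<open>s\<^sub>0 = 0\<close> the welfare is the probability \<open>q\<close> of agent 0; if \<open>q > 1/2 + \<epsilon>\<close>, then at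
  \<open>s\<^sub>0 = 1\<close> agent 0 still wins with probability above \<open>q\<close>, leaving less than \<open>1/2\<close> for agent 1,
  whose value \<open>H = 1 + 1/\<epsilon>\<close> dominates.

  (b) Agent \<open>i\<close>'s value is \<open>g(\<Sum>\<^sub>j\<^sub>\<noteq>\<^sub>i s\<^sub>j)\<close> for a convex kink \<open>g\<close> of slopes \<open>1\<close> and \<open>d\<close>; the
  slopes are what make the values \<open>d\<close>-SOS. At the all-ones profile some agent \<open>k\<close> wins with
  probability \<open>\<le> 1/n\<close>; at the profile where only \<open>s\<^sub>k\<close> is lowered to 0, agent \<open>k\<close> alone sees
  \<open>n - 1\<close> ones and has value \<open>n - 2 + d\<close>, beyond the kink, while all others have \<open>n - 2\<close>.
  So the welfare there is at most \<open>(n - 2 + d)/n + (n - 2) \<le> 2(n - 2 + d)/n\<close> once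
  \<open>d \<ge> (n - 1)(n - 2)\<close>.\<close>

lemma sum_fun_upd_remove:
  assumes "finite A" "j \<in> A"
  shows "sum (s(j := y)) A = sum s (A - {j}) + (y::real)"
proof -
  have "sum (s(j := y)) A = y + sum (s(j := y)) (A - {j})"
    using assms by (simp add: sum.remove)
  also have "sum (s(j := y)) (A - {j}) = sum s (A - {j})"
    by (rule sum.cong) auto
  finally show ?thesis by simp
qed

lemma ex_le_inverse_of_sum_le_1:
  fixes a :: "nat \<Rightarrow> real"
  assumes "n > 0" "(\<Sum>i<n. a i) \<le> 1"
  shows "\<exists>k<n. a k \<le> 1 / real n"
proof (rule ccontr)
  assume "\<not> ?thesis"
  then have "(\<Sum>i<n. 1 / real n) < (\<Sum>i<n. a i)"
    using assms(1) by (intro sum_strict_mono) auto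
  with assms show False by simp
qed

lemma ic_mechanism_lower_signal:
  assumes "ic_mechanism n T x" "i < n" "i \<notin> T" "s \<in> profiles n T" "t \<le> s i"
    "s(i := t) \<in> profiles n T"
  shows "x (s(i := t)) i \<le> x s i"
  using assms unfolding ic_mechanism_def
  by (metis fun_upd_same fun_upd_triv fun_upd_upd)

lemma welfare_le_small_share:
  assumes feasible: "\<forall>i<n. 0 \<le> x s i" "(\<Sum>i<n. x s i) \<le> 1"
    and k: "k < n" "x s k \<le> a" "0 \<le> v k s"
    and others: "\<forall>i<n. i \<noteq> k \<longrightarrow> v i s \<le> B" "0 \<le> B"
  shows "welfare n x v s \<le> a * v k s + B"
proof -
  have split: "(\<Sum>i<n. f i) = f k + (\<Sum>i\<in>{..<n} - {k}. f i)" for f :: "nat \<Rightarrow> real"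
    using k(1) by (simp add: sum.remove)
  have "(\<Sum>i\<in>{..<n} - {k}. x s i * v i s) \<le> (\<Sum>i\<in>{..<n} - {k}. x s i) * B"
    unfolding sum_distrib_right using feasible others by (intro sum_mono mult_left_mono) auto
  also have "\<dots> \<le> B"
    using feasible split[of "x s"] k others by (intro mult_left_le_one_le) (auto intro: sum_nonneg)
  finally show ?thesis
    unfolding welfare_def split[of "\<lambda>i. x s i * v i s"]
    using k by (intro add_mono mult_right_mono) auto
qed

definition two_agent_values :: "real \<Rightarrow> nat \<Rightarrow> (nat \<Rightarrow> real) \<Rightarrow> real" where
  "two_agent_values H i s = (if i = 0 then 1 else H * min (s 0) 1)"

lemma valid_two_agent_values:
  assumes "H \<ge> 0"
  shows "valid_values 2 {1} (two_agent_values H)"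
  unfolding valid_values_def
proof (intro conjI allI impI ballI)
  fix i s s' assume "\<forall>j::nat. s j \<le> (s' j :: real)"
  then have "min (s 0) 1 \<le> min (s' 0) 1" by (meson min.mono order_refl)
  then show "two_agent_values H i s \<le> two_agent_values H i s'"
    unfolding two_agent_values_def using assms by (auto intro: mult_left_mono)
qed (use assms in \<open>auto simp: two_agent_values_def profiles_def\<close>)

lemma SOS_two_agent_values: "d_SOS 1 2 {1} (two_agent_values H)"
  unfolding d_SOS_def two_agent_values_def by (auto simp: less_Suc_eq numeral_2_eq_2)

lemma two_agent_welfare_bound:
  assumes "ic_mechanism 2 {1} x" "\<epsilon> > 0"
  defines "v \<equiv> two_agent_values (1 + 1 / \<epsilon>)"
  shows "\<exists>s\<in>profiles 2 {1}. opt_welfare 2 v s > 0 \<and> welfare 2 x v s \<le> (1/2 + \<epsilon>) * opt_welfare 2 v s"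
proof -
  define H where "H = 1 + 1 / \<epsilon>"
  have H1: "H \<ge> 1" using assms(2) by (simp add: H_def)
  have two: "{..<2::nat} = {0, 1}" by auto
  define z :: "nat \<Rightarrow> real" where "z = (\<lambda>_. 0)"
  define p where "p = z(0 := 1)"
  have zp: "z \<in> profiles 2 {1}" and pp: "p \<in> profiles 2 {1}"
    unfolding p_def z_def profiles_def by auto
  have mono: "x z 0 \<le> x p 0"
    using ic_mechanism_lower_signal[OF assms(1), of 0 p 0] pp zp
    by (simp add: p_def z_def fun_upd_idem)
  have feasible_p: "0 \<le> x p 1" "x p 0 + x p 1 \<le> 1"
    using assms(1) pp unfolding ic_mechanism_def by (auto simp: two)
  show ?thesis
  proof (cases "x z 0 \<le> 1/2 + \<epsilon>")
    case True
    have "opt_welfare 2 v z = 1" "welfare 2 x v z = x z 0"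
      unfolding opt_welfare_def welfare_def v_def two_agent_values_def z_def two by simp_all
    with True zp show ?thesis by (intro bexI[of _ z]) auto
  next
    case False
    have opt: "opt_welfare 2 v p = H"
      unfolding opt_welfare_def v_def two_agent_values_def p_def z_def two H_def[symmetric]
      using H1 by simp
    have "welfare 2 x v p = x p 0 + x p 1 * H"
      unfolding welfare_def v_def two_agent_values_def p_def z_def two H_def[symmetric] by simp
    also have "\<dots> \<le> x p 0 + (1 - x p 0) * H"
      using feasible_p H1 by (intro add_left_mono mult_right_mono) auto
    also have "\<dots> = H - x p 0 * (H - 1)" by (simp add: algebra_simps)
    also have "\<dots> \<le> H - (1/2 + \<epsilon>) * (H - 1)"
      using False mono H1 by (intro diff_left_mono mult_right_mono) auto
    also have "\<dots> \<le> (1/2 + \<epsilon>) * H"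
      using assms(2) by (simp add: H_def field_simps)
    finally show ?thesis using pp opt H1 by (intro bexI[of _ p]) auto
  qed
qed

definition kink :: "real \<Rightarrow> real \<Rightarrow> real \<Rightarrow> real" where
  "kink d c t = t + (d - 1) * max 0 (t - c)"

lemma kink_increment_bounds:
  assumes "d \<ge> 1" "\<delta> \<ge> 0"
  shows "\<delta> \<le> kink d c (t + \<delta>) - kink d c t" "kink d c (t + \<delta>) - kink d c t \<le> d * \<delta>"
proof -
  define r where "r = max 0 (t + \<delta> - c) - max 0 (t - c)"
  have r: "0 \<le> r" "r \<le> \<delta>" using assms(2) by (auto simp: r_def)
  have e: "kink d c (t + \<delta>) - kink d c t = \<delta> + (d - 1) * r"
    unfolding kink_def r_def by (simp add: algebra_simps)
  have "0 \<le> (d - 1) * r" "(d - 1) * r \<le> (d - 1) * \<delta>"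
    using assms r by (auto intro: mult_left_mono)
  then show "\<delta> \<le> kink d c (t + \<delta>) - kink d c t" "kink d c (t + \<delta>) - kink d c t \<le> d * \<delta>"
    unfolding e by (simp_all add: algebra_simps)
qed

lemma kink_mono: "d \<ge> 1 \<Longrightarrow> t \<le> u \<Longrightarrow> kink d c t \<le> kink d c u"
  using kink_increment_bounds(1)[of d "u - t" c t] by simp

lemma kink_nonneg: "d \<ge> 1 \<Longrightarrow> t \<ge> 0 \<Longrightarrow> kink d c t \<ge> 0"
  unfolding kink_def by simp

definition others_kink_values :: "real \<Rightarrow> real \<Rightarrow> nat \<Rightarrow> nat \<Rightarrow> (nat \<Rightarrow> real) \<Rightarrow> real" where
  "others_kink_values d c n i s = kink d c (\<Sum>j\<in>{..<n} - {i}. s j)"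

lemma valid_others_kink_values:
  assumes "d \<ge> 1"
  shows "valid_values n {} (others_kink_values d c n)"
  unfolding valid_values_def others_kink_values_def
  using assms by (auto intro!: kink_nonneg kink_mono sum_nonneg sum_mono simp: profiles_def)

lemma d_SOS_others_kink_values:
  assumes d: "d \<ge> 1"
  shows "d_SOS d n {} (others_kink_values d c n)"
  unfolding d_SOS_def
proof (intro allI impI ballI)
  fix i j :: nat and s s' :: "nat \<Rightarrow> real" and \<delta> :: real
  assume ij: "i < n" "j < n" and \<delta>: "\<delta> \<ge> 0"
  let ?v = "others_kink_values d c n i"
  show "?v (s(j := s j + \<delta>)) - ?v s \<le> d * (?v (s'(j := s j + \<delta>)) - ?v (s'(j := s j)))"
  proof (cases "j = i")
    case True
    have "(\<Sum>l\<in>{..<n} - {i}. (f(j := y)) l) = (\<Sum>l\<in>{..<n} - {i}. f l)" for f :: "nat \<Rightarrow> real" and y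
      using True by (intro sum.cong) auto
    then show ?thesis unfolding others_kink_values_def by simp
  next
    case False
    then have A: "finite ({..<n} - {i})" "j \<in> {..<n} - {i}" using ij by auto
    have incr: "?v (f(j := y + \<delta>)) - ?v (f(j := y)) = kink d c (t + \<delta>) - kink d c t"
      if "t = (\<Sum>l\<in>{..<n} - {i} - {j}. f l) + y" for f t y
      unfolding others_kink_values_def sum_fun_upd_remove[OF A] that by (simp add: add.assoc)
    have "?v (s(j := s j + \<delta>)) - ?v s \<le> d * \<delta>"
      using incr[OF refl, of s "s j"] kink_increment_bounds(2)[OF d \<delta>] by simp
    also have "\<dots> \<le> d * (?v (s'(j := s j + \<delta>)) - ?v (s'(j := s j)))"
      using incr[OF refl, of s' "s j"] kink_increment_bounds(1)[OF d \<delta>] d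
      by (intro mult_left_mono) auto
    finally show ?thesis .
  qed
qed

lemma others_kink_welfare_bound:
  assumes ic: "ic_mechanism n {} x" and n: "n \<ge> 2"
    and d: "d \<ge> 1" "(real n - 1) * (real n - 2) \<le> d"
  defines "v \<equiv> others_kink_values d (real n - 2) n"
  shows "\<exists>s\<in>profiles n {}. opt_welfare n v s > 0 \<and> welfare n x v s \<le> 2 / real n * opt_welfare n v s"
proof -
  define ones :: "nat \<Rightarrow> real" where "ones = (\<lambda>j. if j < n then 1 else 0)"
  have ones_prof: "ones \<in> profiles n {}" unfolding ones_def profiles_def by auto
  have feasible: "\<forall>i<n. 0 \<le> x s i" "(\<Sum>i<n. x s i) \<le> 1" if "s \<in> profiles n {}" for s
    using ic that unfolding ic_mechanism_def by auto
  obtain k where k: "k < n" "x ones k \<le> 1 / real n"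
    using ex_le_inverse_of_sum_le_1[OF _ feasible(2)[OF ones_prof]] n by auto
  define p where "p = ones(k := 0)"
  have p_prof: "p \<in> profiles n {}" unfolding p_def ones_def profiles_def by auto
  have xk: "x p k \<le> 1 / real n"
    using ic_mechanism_lower_signal[OF ic k(1) _ ones_prof, of 0] p_prof k
    by (simp add: p_def ones_def)
  define A where "A = real n - 2 + d"
  define B where "B = real n - 2"
  have vk: "v k p = A"
  proof -
    have "(\<Sum>j\<in>{..<n} - {k}. p j) = (\<Sum>j\<in>{..<n} - {k}. 1)"
      by (intro sum.cong) (auto simp: p_def ones_def)
    then show ?thesis
      using k n by (simp add: v_def others_kink_values_def kink_def A_def of_nat_diff)
  qed
  have vi: "v i p = B" if "i < n" "i \<noteq> k" for i
  proof -
    have kA: "finite ({..<n} - {i})" "k \<in> {..<n} - {i}" using that k by auto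
    have "(\<Sum>j\<in>{..<n} - {i}. p j) = (\<Sum>j\<in>{..<n} - {i} - {k}. 1)"
      unfolding p_def sum_fun_upd_remove[OF kA] by (auto simp: ones_def intro!: sum.cong)
    moreover have "card ({..<n} - {i} - {k}) = n - 2" using that k by (simp add: card_Diff_singleton)
    ultimately show ?thesis
      using n by (simp add: v_def others_kink_values_def kink_def B_def of_nat_diff)
  qed
  have B0: "B \<ge> 0" and A0: "A > 0" using n d by (simp_all add: A_def B_def)
  have opt: "A \<le> opt_welfare n v p"
    unfolding opt_welfare_def using k vk by (intro Max_ge) auto
  have "welfare n x v p \<le> 1 / real n * A + B"
    using welfare_le_small_share[where x = x and s = p and v = v, OF feasible[OF p_prof] k(1) xk] vk vi A0 B0 by auto
  also have "\<dots> \<le> 2 / real n * A"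
  proof -
    have "real n * B \<le> A" using d(2) by (simp add: A_def B_def algebra_simps)
    then show ?thesis using n by (simp add: field_simps)
  qed
  also have "\<dots> \<le> 2 / real n * opt_welfare n v p"
    using opt by (intro mult_left_mono) auto
  finally show ?thesis using p_prof opt A0 by (intro bexI[of _ p]) auto
qed

theorem mainTheorem4:
  shows "(\<forall>\<epsilon>::real. \<epsilon> > 0 \<longrightarrow>
           (\<exists>T v. valid_values 2 T v \<and> d_SOS 1 2 T v \<and>
              (\<forall>x. ic_mechanism 2 T x \<longrightarrow>
                 (\<exists>s\<in>profiles 2 T. opt_welfare 2 v s > 0 \<and>
                    welfare 2 x v s \<le> (1/2 + \<epsilon>) * opt_welfare 2 v s))))
       \<and>
       (\<exists>f::nat \<Rightarrow> real. f \<longlonglongrightarrow> 0 \<and>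
          (\<forall>m::nat. m \<ge> 3 \<longrightarrow>
             (\<exists>T v. valid_values m T v \<and> d_SOS (real (m^2)) m T v \<and>
                (\<forall>x. ic_mechanism m T x \<longrightarrow>
                   (\<exists>s\<in>profiles m T. opt_welfare m v s > 0 \<and>
                      welfare m x v s \<le> (2 * sqrt (real (m^2)) / real (m^2) + f m) * opt_welfare m v s)))))"
  apply (intro conjI exI[of _ "\<lambda>_. 0"] allI impI)
  subgoal for \<epsilon>
    by (intro exI[of _ "{1}"] exI[of _ "two_agent_values (1 + 1 / \<epsilon>)"] conjI allI impI
        valid_two_agent_values SOS_two_agent_values two_agent_welfare_bound) auto
  subgoal by simp
  subgoal premises m for m
  proof -
    have d: "1 \<le> real (m^2)" "(real m - 1) * (real m - 2) \<le> real (m^2)"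
      using m mult_mono[of 1 "real m" 1 "real m"] by (simp_all add: power2_eq_square algebra_simps)
    have ratio: "2 * sqrt (real (m^2)) / real (m^2) + 0 = 2 / real m"
      by (simp add: power2_eq_square)
    show ?thesis
      unfolding ratio using m
      by (intro exI[of _ "{}"] exI[of _ "others_kink_values (real (m^2)) (real m - 2) m"] conjI allI
          impI valid_others_kink_values d_SOS_others_kink_values others_kink_welfare_bound d) auto
  qed
  done

end
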